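(* Let $p+q=p'+q'=n\ge3$. If there is an isomorphism $\mathbb{O}_{p,q}\to\mathbb{O}_{p',q'}$ preserving the structure of $\mathbb{Z}_2^n$-graded algebra, then $s(p,q)=s(p',q')$.
   Context: $\mathbb{Z}_2=\{0,1\}$. For $p+q=n\ge3$, $\mathbb{O}_{p,q}$ is the real algebra with basis $\{u_x: x\in\mathbb{Z}_2^n\}$ and product $u_x\cdot u_y=(-1)^{f(x,y)}u_{x+y}$, where $f(x,y)=\sum_{1\le i<j<k\le n}(x_ix_jy_k+x_iy_jx_k+y_ix_jx_k)+\sum_{1\le i\le j\le n}x_iy_j+\sum_{1\le i\le p}x_iy_i$. Let $\alpha_{p,q}(x)=f(x,x)$ (so $u_x^2=(-1)^{\alpha_{p,q}(x)}u_0$), and define the statistics $s(p,q)=\#\{x\in\mathbb{Z}_2^n:\alpha_{p,q}(x)=1\}$. An isomorphism preserving the graded structure is an algebra isomorphism sending each homogeneous element (scalar multiple of some $u_x$) to a homogeneous element. *)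

theory Defs
  imports Complex_Main
begin

text \<open>Elements of Z_2^n are boolean lists of length n; coordinate i (1-based in the paper)
 is list index i-1.  Elements of the algebra O_{p,q} are real-valued functions on
 bool lists supported on lists of length n (coefficients w.r.t. the basis u_x).\<close>

definition vecs :: "nat \<Rightarrow> bool list set" where
  "vecs n = {x. length x = n}"

definition bit :: "bool list \<Rightarrow> nat \<Rightarrow> nat" where
  "bit x i = (if x ! i then 1 else 0)"

definition zadd :: "bool list \<Rightarrow> bool list \<Rightarrow> bool list" where
  "zadd x y = map2 (\<lambda>a b. a \<noteq> b) x y"

text \<open>The twist function f(x,y), computed in nat; only its parity matters.\<close>
definition ftw :: "nat \<Rightarrow> nat \<Rightarrow> bool list \<Rightarrow> bool list \<Rightarrow> nat" where
  "ftw p q x y =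
     (\<Sum>k<p+q. \<Sum>j<k. \<Sum>i<j. bit x i * bit x j * bit y k + bit x i * bit y j * bit x k
                               + bit y i * bit x j * bit x k)
   + (\<Sum>j<p+q. \<Sum>i\<le>j. bit x i * bit y j)
   + (\<Sum>i<p. bit x i * bit y i)"

definition alpha :: "nat \<Rightarrow> nat \<Rightarrow> bool list \<Rightarrow> nat" where
  "alpha p q x = ftw p q x x mod 2"

definition s_stat :: "nat \<Rightarrow> nat \<Rightarrow> nat" where
  "s_stat p q = card {x \<in> vecs (p+q). alpha p q x = 1}"

definition carrierO :: "nat \<Rightarrow> (bool list \<Rightarrow> real) set" where
  "carrierO n = {a. \<forall>x. length x \<noteq> n \<longrightarrow> a x = 0}"

definition basisO :: "bool list \<Rightarrow> (bool list \<Rightarrow> real)" where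
  "basisO x = (\<lambda>z. if z = x then 1 else 0)"

text \<open>Bilinear extension of u_x u_y = (-1)^f(x,y) u_{x+y}.\<close>
definition multO :: "nat \<Rightarrow> nat \<Rightarrow> (bool list \<Rightarrow> real) \<Rightarrow> (bool list \<Rightarrow> real) \<Rightarrow> (bool list \<Rightarrow> real)" where
  "multO p q a b = (\<lambda>z. \<Sum>x\<in>vecs (p+q). \<Sum>y\<in>vecs (p+q).
      (if zadd x y = z then (-1) ^ ftw p q x y * a x * b y else 0))"

definition homogeneous :: "nat \<Rightarrow> (bool list \<Rightarrow> real) \<Rightarrow> bool" where
  "homogeneous n a = (\<exists>x\<in>vecs n. \<exists>c::real. a = (\<lambda>z. c * basisO x z))"

definition graded_iso :: "nat \<Rightarrow> nat \<Rightarrow> nat \<Rightarrow> nat \<Rightarrow> ((bool list \<Rightarrow> real) \<Rightarrow> (bool list \<Rightarrow> real)) \<Rightarrow> bool" where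
  "graded_iso p q p' q' \<phi> \<longleftrightarrow>
     bij_betw \<phi> (carrierO (p+q)) (carrierO (p'+q')) \<and>
     (\<forall>a\<in>carrierO (p+q). \<forall>b\<in>carrierO (p+q). \<phi> (\<lambda>z. a z + b z) = (\<lambda>z. \<phi> a z + \<phi> b z)) \<and>
     (\<forall>a\<in>carrierO (p+q). \<forall>c::real. \<phi> (\<lambda>z. c * a z) = (\<lambda>z. c * \<phi> a z)) \<and>
     (\<forall>a\<in>carrierO (p+q). \<forall>b\<in>carrierO (p+q). \<phi> (multO p q a b) = multO p' q' (\<phi> a) (\<phi> b)) \<and>
     (\<forall>a\<in>carrierO (p+q). homogeneous (p+q) a \<longrightarrow> homogeneous (p'+q') (\<phi> a))"

end

theory Submission
  imports Defs
begin

text \<open>A graded isomorphism \<phi> sends each basis vector u_x to a nonzero multiple d u_{\<sigma> x};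
 injectivity of \<phi> makes \<sigma> a permutation of Z_2^n. Squares of homogeneous elements lie in
 \<real> u_0, so u_0 is the only nonzero homogeneous idempotent and \<phi> fixes it; and applying \<phi> to u_x^2 = (-1)^\<alpha>(x) u_0 gives
 (-1)^\<alpha>(x) u_0 = d^2 (-1)^\<alpha>'(\<sigma> x) u_0. As d^2 > 0, \<sigma> carries \<alpha> to \<alpha>', so it maps
 {x. \<alpha>(x) = 1} bijectively onto {y. \<alpha>'(y) = 1}.\<close>

lemma finite_vecs [simp]: "finite (vecs n)"
proof -
  have "vecs n = {xs. set xs \<subseteq> (UNIV :: bool set) \<and> length xs = n}"
    by (auto simp: vecs_def)
  then show ?thesis
    using finite_lists_length_eq[of "UNIV :: bool set" n] by simp
qed

lemma scaled_basisO_in_carrierO: "x \<in> vecs n \<Longrightarrow> (\<lambda>z. c * basisO x z) \<in> carrierO n"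
  by (auto simp: vecs_def carrierO_def basisO_def)

lemma basisO_in_carrierO: "x \<in> vecs n \<Longrightarrow> basisO x \<in> carrierO n"
  using scaled_basisO_in_carrierO[of x n 1] by simp

lemma scaled_basisO_eq_iff:
  assumes "a \<noteq> 0"
  shows "(\<lambda>z. a * basisO x z) = (\<lambda>z. b * basisO y z) \<longleftrightarrow> x = y \<and> a = b"
proof
  assume eq: "(\<lambda>z. a * basisO x z) = (\<lambda>z. b * basisO y z)"
  from fun_cong[OF eq, of x] assms have "x = y"
    by (auto simp: basisO_def split: if_splits)
  with fun_cong[OF eq, of x] show "x = y \<and> a = b"
    by (simp add: basisO_def)
qed simp

lemma zadd_self: "zadd x x = replicate (length x) False"
  by (induct x) (auto simp: zadd_def)

lemma alpha_zero: "alpha p q (replicate (p + q) False) = 0"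
  by (simp add: alpha_def ftw_def bit_def)

lemma multO_scaled_basisO:
  assumes "x \<in> vecs (p + q)" "y \<in> vecs (p + q)"
  shows "multO p q (\<lambda>z. a * basisO x z) (\<lambda>z. b * basisO y z)
       = (\<lambda>z. ((-1) ^ ftw p q x y * a * b) * basisO (zadd x y) z)"
proof
  fix z
  let ?V = "vecs (p + q)"
  let ?c = "\<lambda>x' y'. if zadd x' y' = z then (-1) ^ ftw p q x' y' * a * b else (0::real)"
  have "multO p q (\<lambda>z. a * basisO x z) (\<lambda>z. b * basisO y z) z
      = (\<Sum>x'\<in>?V. \<Sum>y'\<in>?V. if x' = x then if y' = y then ?c x' y' else 0 else 0)"
    unfolding multO_def by (intro sum.cong refl) (simp add: basisO_def)
  also have "\<dots> = (\<Sum>x'\<in>?V. if x' = x then \<Sum>y'\<in>?V. if y' = y then ?c x' y' else 0 else 0)"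
    by (intro sum.cong refl) simp
  also have "\<dots> = ?c x y"
    using assms by (simp only: sum.delta finite_vecs if_True)
  finally show "multO p q (\<lambda>z. a * basisO x z) (\<lambda>z. b * basisO y z) z
      = ((-1) ^ ftw p q x y * a * b) * basisO (zadd x y) z"
    by (auto simp: basisO_def)
qed

lemma alpha_less_2: "alpha p q x < 2"
  by (simp add: alpha_def)

lemma minus_one_power_eq_scaled:
  fixes c :: real
  assumes "(-1) ^ a = (-1) ^ b * c" "c > 0" "a < 2" "b < 2"
  shows "a = b"
  using assms by (auto simp: less_2_cases_iff)

lemma multO_scaled_basisO_square:
  assumes "x \<in> vecs (p + q)"
  shows "multO p q (\<lambda>z. c * basisO x z) (\<lambda>z. c * basisO x z)
       = (\<lambda>z. ((-1) ^ alpha p q x * c\<^sup>2) * basisO (replicate (p + q) False) z)"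
proof -
  have "(-1::real) ^ ftw p q x x = (-1) ^ alpha p q x"
    by (simp add: alpha_def minus_one_power_iff)
  moreover have "zadd x x = replicate (p + q) False"
    using assms by (simp add: zadd_self vecs_def)
  ultimately show ?thesis
    using multO_scaled_basisO[OF assms assms, of c c] by (simp add: power2_eq_square mult.assoc)
qed

locale graded_iso_pair =
  fixes p q p' q' :: nat and \<phi> :: "(bool list \<Rightarrow> real) \<Rightarrow> bool list \<Rightarrow> real"
  assumes graded_iso: "graded_iso p q p' q' \<phi>" and same_dim: "p' + q' = p + q"
begin

abbreviation V :: "bool list set" where "V \<equiv> vecs (p + q)"
abbreviation zero :: "bool list" where "zero \<equiv> replicate (p + q) False"

lemma zero_in_V: "zero \<in> V"
  by (simp add: vecs_def)

lemma inj_on_carrierO: "inj_on \<phi> (carrierO (p + q))"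
  using graded_iso same_dim by (auto simp: graded_iso_def dest: bij_betw_imp_inj_on)

lemma map_scale: "a \<in> carrierO (p + q) \<Longrightarrow> \<phi> (\<lambda>z. c * a z) = (\<lambda>z. c * \<phi> a z)"
  using graded_iso by (simp add: graded_iso_def)

lemma map_mult:
  "a \<in> carrierO (p + q) \<Longrightarrow> b \<in> carrierO (p + q) \<Longrightarrow> \<phi> (multO p q a b) = multO p' q' (\<phi> a) (\<phi> b)"
  using graded_iso by (simp add: graded_iso_def)

lemma map_homogeneous:
  "a \<in> carrierO (p + q) \<Longrightarrow> homogeneous (p + q) a \<Longrightarrow> homogeneous (p + q) (\<phi> a)"
  using graded_iso same_dim by (simp add: graded_iso_def)

lemma map_zero: "\<phi> (\<lambda>z. 0) = (\<lambda>z. 0)"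
proof -
  have "(\<lambda>z. 0) \<in> carrierO (p + q)" by (simp add: carrierO_def)
  from map_scale[OF this, of 0] show ?thesis by simp
qed

lemma map_basisO:
  assumes "x \<in> V"
  shows "\<exists>y d. y \<in> V \<and> d \<noteq> 0 \<and> \<phi> (basisO x) = (\<lambda>z. d * basisO y z)"
proof -
  have "homogeneous (p + q) (basisO x)"
    unfolding homogeneous_def using assms by force
  then have "homogeneous (p + q) (\<phi> (basisO x))"
    using map_homogeneous basisO_in_carrierO[OF assms] by blast
  then obtain y d where y: "y \<in> V" and d: "\<phi> (basisO x) = (\<lambda>z. d * basisO y z)"
    unfolding homogeneous_def by blast
  have "d \<noteq> 0"
  proof
    assume "d = 0"
    then have "\<phi> (basisO x) = \<phi> (\<lambda>z. 0)" using d map_zero by simp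
    then have "basisO x = (\<lambda>z. 0)"
      using inj_on_carrierO basisO_in_carrierO[OF assms] by (auto simp: carrierO_def inj_on_def)
    from fun_cong[OF this, of x] show False by (simp add: basisO_def)
  qed
  with y d show ?thesis by blast
qed

definition grade_map :: "bool list \<Rightarrow> bool list" where
  "grade_map x = (SOME y. y \<in> V \<and> (\<exists>d. d \<noteq> 0 \<and> \<phi> (basisO x) = (\<lambda>z. d * basisO y z)))"

lemma grade_map:
  assumes "x \<in> V"
  obtains d where "grade_map x \<in> V" "d \<noteq> 0" "\<phi> (basisO x) = (\<lambda>z. d * basisO (grade_map x) z)"
proof -
  have "grade_map x \<in> V \<and> (\<exists>d. d \<noteq> 0 \<and> \<phi> (basisO x) = (\<lambda>z. d * basisO (grade_map x) z))"
    unfolding grade_map_def by (rule someI_ex) (use map_basisO[OF assms] in blast)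
  with that show thesis by blast
qed

lemma map_basisO_zero: "\<phi> (basisO zero) = basisO zero"
proof -
  obtain d where in_V: "grade_map zero \<in> V" and d: "d \<noteq> 0"
    and image: "\<phi> (basisO zero) = (\<lambda>z. d * basisO (grade_map zero) z)"
    using grade_map[OF zero_in_V] .
  have "multO p q (basisO zero) (basisO zero) = basisO zero"
    using multO_scaled_basisO_square[OF zero_in_V, of 1] alpha_zero[of p q] by simp
  then have "\<phi> (basisO zero) = multO p' q' (\<phi> (basisO zero)) (\<phi> (basisO zero))"
    using map_mult basisO_in_carrierO[OF zero_in_V] by metis
  also have "\<dots> = (\<lambda>z. ((-1) ^ alpha p' q' (grade_map zero) * d\<^sup>2) * basisO zero z)"
    using multO_scaled_basisO_square[of "grade_map zero" p' q' d] in_V same_dim image by simp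
  finally have fixed: "grade_map zero = zero" and "d = (-1) ^ alpha p' q' (grade_map zero) * d\<^sup>2"
    using image scaled_basisO_eq_iff[OF d] by auto
  moreover have "alpha p' q' zero = 0"
    by (metis alpha_zero same_dim)
  ultimately have "d = d\<^sup>2" by simp
  with d have "d = 1" by (simp add: power2_eq_square)
  with image fixed show ?thesis by simp
qed

lemma alpha_grade_map:
  assumes x: "x \<in> V"
  shows "alpha p' q' (grade_map x) = alpha p q x"
proof -
  obtain d where in_V: "grade_map x \<in> V" and d: "d \<noteq> 0"
    and image: "\<phi> (basisO x) = (\<lambda>z. d * basisO (grade_map x) z)"
    using grade_map[OF x] .
  have "(\<lambda>z. (-1) ^ alpha p q x * basisO zero z)
      = \<phi> (\<lambda>z. (-1) ^ alpha p q x * basisO zero z)"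
    using map_scale[OF basisO_in_carrierO[OF zero_in_V]] map_basisO_zero by simp
  also have "\<dots> = \<phi> (multO p q (basisO x) (basisO x))"
    using multO_scaled_basisO_square[OF x, of 1] by simp
  also have "\<dots> = multO p' q' (\<phi> (basisO x)) (\<phi> (basisO x))"
    using map_mult basisO_in_carrierO[OF x] by metis
  also have "\<dots> = (\<lambda>z. ((-1) ^ alpha p' q' (grade_map x) * d\<^sup>2) * basisO zero z)"
    using multO_scaled_basisO_square[of "grade_map x" p' q' d] in_V same_dim image by simp
  finally have signs: "(-1::real) ^ alpha p q x = (-1) ^ alpha p' q' (grade_map x) * d\<^sup>2"
    by (subst (asm) scaled_basisO_eq_iff) simp_all
  moreover have "d\<^sup>2 > 0" using d by simp
  ultimately show ?thesis
    using minus_one_power_eq_scaled alpha_less_2 by metis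
qed

lemma inj_on_grade_map: "inj_on grade_map V"
proof (rule inj_onI)
  fix x1 x2 assume x1: "x1 \<in> V" and x2: "x2 \<in> V" and eq: "grade_map x1 = grade_map x2"
  obtain d1 where d1: "d1 \<noteq> 0" and image1: "\<phi> (basisO x1) = (\<lambda>z. d1 * basisO (grade_map x1) z)"
    using grade_map[OF x1] .
  obtain d2 where d2: "d2 \<noteq> 0" and image2: "\<phi> (basisO x2) = (\<lambda>z. d2 * basisO (grade_map x1) z)"
    using grade_map[OF x2] eq by metis
  have "\<phi> (\<lambda>z. d2 * basisO x1 z) = \<phi> (\<lambda>z. d1 * basisO x2 z)"
    using map_scale[OF basisO_in_carrierO[OF x1], of d2] map_scale[OF basisO_in_carrierO[OF x2], of d1]
      image1 image2 by (simp add: mult.left_commute)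
  then have "(\<lambda>z. d2 * basisO x1 z) = (\<lambda>z. d1 * basisO x2 z)"
    by (rule inj_onD[OF inj_on_carrierO _ scaled_basisO_in_carrierO[OF x1]
                                         scaled_basisO_in_carrierO[OF x2]])
  then show "x1 = x2" using scaled_basisO_eq_iff[OF d2] by simp
qed

lemma bij_betw_grade_map: "bij_betw grade_map V V"
proof -
  have "grade_map ` V \<subseteq> V" using grade_map by blast
  then show ?thesis
    using endo_inj_surj[OF finite_vecs _ inj_on_grade_map] inj_on_grade_map
    by (simp add: bij_betw_def)
qed

lemma s_stat_eq: "s_stat p q = s_stat p' q'"
proof -
  have "bij_betw grade_map {x \<in> V. alpha p q x = 1} {y \<in> V. alpha p' q' y = 1}"
    by (rule bij_betw_Collect[OF bij_betw_grade_map]) (simp add: alpha_grade_map)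
  then show ?thesis
    unfolding s_stat_def same_dim by (rule bij_betw_same_card)
qed

end

theorem mainTheorem10:
  fixes p q p' q' n :: nat
  assumes "p + q = n" and "p' + q' = n" and "n \<ge> 3"
    and "\<exists>\<phi>. graded_iso p q p' q' \<phi>"
  shows "s_stat p q = s_stat p' q'"
proof -
  obtain \<phi> where "graded_iso p q p' q' \<phi>" using assms(4) by blast
  then interpret graded_iso_pair p q p' q' \<phi>
    using assms(1,2) by (simp add: graded_iso_pair_def)
  show ?thesis by (rule s_stat_eq)
qed

end
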